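(* Let $H\in\mathbb{R}^{n_z\times n_z}$ be symmetric positive definite, $F\in\mathbb{R}^{n_x\times n_z}$, $G\in\mathbb{R}^{n_c\times n_z}$, $S\in\mathbb{R}^{n_c\times n_x}$, $w\in\mathbb{R}^{n_c}$, and assume $\{z: Gz\le Sx+w\}\neq\emptyset$ for every $x\in\mathbb{R}^{n_x}$. Let $\kappa$ be a global Lipschitz constant and let $x,\hat{x}\in\mathbb{R}^{n_x}$. Let $v(\hat{x})=(\hat{x},z^*(\hat{x}))\in\mathbb{R}^{n_x+n_z}$, $$\mathbb{D}(x)=\{j\in\{1,\dots,n_c\}: \mathcal{B}(z^*(\hat{x}),\kappa\|x-\hat{x}\|)\subseteq\mathcal{Z}_j(x)\},$$ $$\mathbb{E}(x)=\{j\in\{1,\dots,n_c\}: \mathcal{B}(v(\hat{x}),\sqrt{1+\kappa^2}\,\|x-\hat{x}\|)\subseteq\mathcal{V}_j\}.$$ Then (a) $v(\hat{x})\in\mathcal{V}$, and (b) $\mathbb{E}(x)\subseteq\mathbb{D}(x)$.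
   Context: mp-QP$(x)$: minimize $V(z)=\frac12z^THz+x^TFz$ over $\mathcal{Z}(x)=\{z: Gz\le Sx+w\}$, with unique minimizer $z^*(x)$. $G_j,S_j$ are the $j$-th rows of $G,S$, $w_j$ the $j$-th entry of $w$, $\mathcal{Z}_j(x)=\{z: G_jz\le S_jx+w_j\}$. For $\mathbb{I}\subseteq\{1,\dots,n_c\}$, $z^*(x,\mathbb{I})$ is the unique minimizer of $V$ subject to only the constraints indexed by $\mathbb{I}$. A global Lipschitz constant is $\kappa\in\mathbb{R}$ with $\|z^*(x_1,\mathbb{I})-z^*(x_2,\mathbb{I})\|\le\kappa\|x_1-x_2\|$ for all $x_1,x_2$ and all $\mathbb{I}$. Lifted sets: with $\bar H=[-S,\;G]\in\mathbb{R}^{n_c\times(n_x+n_z)}$ and $\bar H_j$ its $j$-th row, $\mathcal{V}=\{v\in\mathbb{R}^{n_x+n_z}: \bar Hv\le w\}$ and $\mathcal{V}_j=\{v:\bar H_jv\le w_j\}$. $\mathcal{B}(q,r)$ is the closed Euclidean ball of radius $r$ centered at $q$. *)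

theory Defs
  imports "HOL-Analysis.Analysis"
begin

text \<open>Dimensions n_x, n_z, n_c are the finite index types 'x, 'z, 'c.
  Matrices: H :: real^'z^'z, F :: real^'z^'x (n_x by n_z), G :: real^'z^'c, S :: real^'x^'c.\<close>

definition qp_cost :: "real^'z^'z \<Rightarrow> real^'z^'x \<Rightarrow> real^'x \<Rightarrow> real^'z \<Rightarrow> real" where
  "qp_cost H F x z = (1/2) * (z \<bullet> (H *v z)) + x \<bullet> (F *v z)"

definition Zj :: "real^'z^'c \<Rightarrow> real^'x^'c \<Rightarrow> real^'c \<Rightarrow> real^'x \<Rightarrow> 'c \<Rightarrow> (real^'z) set" where
  "Zj G S w x j = {z. (G *v z) $ j \<le> (S *v x) $ j + w $ j}"

definition feasI :: "real^'z^'c \<Rightarrow> real^'x^'c \<Rightarrow> real^'c \<Rightarrow> real^'x \<Rightarrow> 'c set \<Rightarrow> (real^'z) set" where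
  "feasI G S w x I = (\<Inter>j\<in>I. Zj G S w x j)"

definition zstarI :: "real^'z^'z \<Rightarrow> real^'z^'x \<Rightarrow> real^'z^'c \<Rightarrow> real^'x^'c \<Rightarrow> real^'c
    \<Rightarrow> real^'x \<Rightarrow> 'c set \<Rightarrow> real^'z" where
  "zstarI H F G S w x I = (THE z. z \<in> feasI G S w x I \<and>
      (\<forall>z'\<in>feasI G S w x I. qp_cost H F x z \<le> qp_cost H F x z'))"

definition zstar :: "real^'z^'z \<Rightarrow> real^'z^'x \<Rightarrow> real^'z^'c \<Rightarrow> real^'x^'c \<Rightarrow> real^'c
    \<Rightarrow> real^'x \<Rightarrow> real^'z" where
  "zstar H F G S w x = zstarI H F G S w x UNIV"

text \<open>Lifted space R^(n_x+n_z) is rendered as the product (real^'x) \<times> (real^'z),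
  whose norm is the Euclidean norm of the concatenation.
  V_j = {v. Hbar_j v <= w_j} with Hbar = [-S, G].\<close>
definition Vj :: "real^'z^'c \<Rightarrow> real^'x^'c \<Rightarrow> real^'c \<Rightarrow> 'c \<Rightarrow> ((real^'x) \<times> (real^'z)) set" where
  "Vj G S w j = {(a, b). (- (S *v a)) $ j + (G *v b) $ j \<le> w $ j}"

definition Vset :: "real^'z^'c \<Rightarrow> real^'x^'c \<Rightarrow> real^'c \<Rightarrow> ((real^'x) \<times> (real^'z)) set" where
  "Vset G S w = (\<Inter>j. Vj G S w j)"

end

theory Submission
  imports Defs
begin

text \<open>(a) The feasible sets are closed intersections of half-spaces, and the cost is coercive
  and strictly convex because \<open>H\<close> is positive definite. Hence \<open>z\<^sup>*(x\<^sub>h)\<close> really is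
  the minimiser of the problem, in particular feasible, which says \<open>v(x\<^sub>h) \<in> V\<close>.
  (b) \<open>(x, z) \<in> V\<^sub>j\<close> is the same as \<open>z \<in> Z\<^sub>j(x)\<close>, and if
  \<open>|z - z\<^sup>*(x\<^sub>h)| \<le> \<kappa> |x - x\<^sub>h|\<close> then by Pythagoras \<open>(x, z)\<close> lies within
  \<open>sqrt (1 + \<kappa>\<^sup>2) |x - x\<^sub>h|\<close> of \<open>v(x\<^sub>h)\<close>.\<close>

lemma pos_def_quadratic_form_coercive:
  fixes H :: "real^'n^'n"
  assumes "\<forall>z. z \<noteq> 0 \<longrightarrow> z \<bullet> (H *v z) > 0"
  obtains m where "m > 0" "\<And>z. m * (norm z)\<^sup>2 \<le> z \<bullet> (H *v z)"
proof -
  have "sphere (0::real^'n) 1 \<noteq> {}"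
    by simp
  moreover have "continuous_on (sphere 0 1) (\<lambda>z::real^'n. z \<bullet> (H *v z))"
    by (intro continuous_intros)
  ultimately obtain u where u: "u \<in> sphere 0 1" "\<forall>y\<in>sphere 0 1. u \<bullet> (H *v u) \<le> y \<bullet> (H *v y)"
    using continuous_attains_inf[OF compact_sphere] by blast
  have "u \<noteq> 0"
    using u(1) by auto
  with assms have u_pos: "u \<bullet> (H *v u) > 0"
    by blast
  have "(u \<bullet> (H *v u)) * (norm z)\<^sup>2 \<le> z \<bullet> (H *v z)" for z
  proof (cases "z = 0")
    case False
    define y where "y = (1 / norm z) *\<^sub>R z"
    have "y \<in> sphere 0 1"
      using False by (simp add: y_def)
    then have "u \<bullet> (H *v u) \<le> y \<bullet> (H *v y)"
      using u(2) by blast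
    moreover have "z \<bullet> (H *v z) = (norm z)\<^sup>2 * (y \<bullet> (H *v y))"
      using False by (simp add: y_def matrix_vector_mult_scaleR power2_eq_square)
    ultimately show ?thesis
      by (metis mult.commute mult_right_mono zero_le_power2)
  qed simp
  with u_pos show thesis
    using that by blast
qed

lemma qp_cost_midpoint:
  "qp_cost H F x ((1/2) *\<^sub>R (a + b)) =
    (qp_cost H F x a + qp_cost H F x b) / 2 - (1/8) * ((a - b) \<bullet> (H *v (a - b)))"
  unfolding qp_cost_def
  by (simp add: inner_add_left inner_add_right algebra_simps)

lemma continuous_qp_cost: "continuous_on A (qp_cost H F x)"
  unfolding qp_cost_def by (intro continuous_intros)

lemma bounded_qp_cost_sublevel:
  fixes H :: "real^'z^'z"
  assumes "\<forall>z. z \<noteq> 0 \<longrightarrow> z \<bullet> (H *v z) > 0"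
  shows "bounded {z. qp_cost H F x z \<le> C}"
proof -
  obtain m where m: "m > 0" "\<And>z. m * (norm z)\<^sup>2 \<le> z \<bullet> (H *v z)"
    using pos_def_quadratic_form_coercive[OF assms] by blast
  define c where "c = norm (x v* F)"
  have "norm z \<le> max 1 (2 * (c + \<bar>C\<bar>) / m)" if "qp_cost H F x z \<le> C" for z
  proof (cases "norm z \<le> 1")
    case False
    have "\<bar>x \<bullet> (F *v z)\<bar> \<le> c * norm z"
      unfolding c_def dot_lmul_matrix[symmetric] by (rule Cauchy_Schwarz_ineq2)
    then have "m/2 * (norm z)\<^sup>2 - c * norm z \<le> C"
      using m(2)[of z] that by (simp add: qp_cost_def abs_le_iff)
    moreover have "C \<le> \<bar>C\<bar> * norm z"
      using False mult_left_mono[of 1 "norm z" "\<bar>C\<bar>"] by simp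
    ultimately have "(m/2 * norm z) * norm z \<le> (c + \<bar>C\<bar>) * norm z"
      by (simp add: power2_eq_square algebra_simps)
    then have "m/2 * norm z \<le> c + \<bar>C\<bar>"
      by (rule mult_right_le_imp_le) (use False in auto)
    then have "norm z \<le> 2 * (c + \<bar>C\<bar>) / m"
      using m(1) by (simp add: field_simps)
    then show ?thesis
      by simp
  qed simp
  then show ?thesis
    unfolding bounded_iff by blast
qed

lemma qp_cost_attains_min:
  fixes H :: "real^'z^'z"
  assumes "\<forall>z. z \<noteq> 0 \<longrightarrow> z \<bullet> (H *v z) > 0" and "closed K" "K \<noteq> {}"
  obtains z where "z \<in> K" "\<And>z'. z' \<in> K \<Longrightarrow> qp_cost H F x z \<le> qp_cost H F x z'"
proof -
  obtain z0 where z0: "z0 \<in> K"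
    using assms(3) by blast
  define L where "L = K \<inter> {z. qp_cost H F x z \<le> qp_cost H F x z0}"
  have "closed L"
    unfolding L_def
    by (intro closed_Int assms(2) closed_Collect_le continuous_qp_cost continuous_intros)
  moreover have "bounded L"
    unfolding L_def by (intro bounded_Int disjI2 bounded_qp_cost_sublevel assms(1))
  moreover have "L \<noteq> {}"
    using z0 unfolding L_def by auto
  ultimately obtain z where "z \<in> L" "\<And>y. y \<in> L \<Longrightarrow> qp_cost H F x z \<le> qp_cost H F x y"
    using continuous_attains_inf[of L "qp_cost H F x"] continuous_qp_cost
    by (metis compact_eq_bounded_closed)
  then show thesis
    using that unfolding L_def by force
qed

lemma qp_cost_min_unique:
  fixes H :: "real^'z^'z"
  assumes "\<forall>z. z \<noteq> 0 \<longrightarrow> z \<bullet> (H *v z) > 0" and "convex K"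
    and a: "a \<in> K" "\<forall>z'\<in>K. qp_cost H F x a \<le> qp_cost H F x z'"
    and b: "b \<in> K" "\<forall>z'\<in>K. qp_cost H F x b \<le> qp_cost H F x z'"
  shows "a = b"
proof (rule ccontr)
  assume "a \<noteq> b"
  then have "(a - b) \<bullet> (H *v (a - b)) > 0"
    using assms(1) by simp
  moreover have "qp_cost H F x b \<le> qp_cost H F x a"
    using a(1) b(2) by blast
  ultimately have "qp_cost H F x ((1/2) *\<^sub>R (a + b)) < qp_cost H F x a"
    unfolding qp_cost_midpoint by argo
  moreover have "(1/2) *\<^sub>R (a + b) \<in> K"
    using convexD[OF \<open>convex K\<close> a(1) b(1), of "1/2" "1/2"] by (simp add: scaleR_right_distrib)
  ultimately show False
    using a(2) by (meson not_le)
qed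

lemma Zj_halfspace: "Zj G S w x j = {z. G $ j \<bullet> z \<le> (S *v x) $ j + w $ j}"
  by (simp add: Zj_def matrix_vector_mult_def inner_vec_def mult.commute)

lemma closed_feasI: "closed (feasI G S w x I)"
  unfolding feasI_def Zj_halfspace
  by (intro closed_INT ballI closed_halfspace_le)

lemma convex_feasI: "convex (feasI G S w x I)"
  unfolding feasI_def Zj_halfspace
  by (intro convex_INT ballI convex_halfspace_le)

lemma zstarI_feasible:
  fixes H :: "real^'z^'z"
  assumes "\<forall>z. z \<noteq> 0 \<longrightarrow> z \<bullet> (H *v z) > 0" and "feasI G S w x I \<noteq> {}"
  shows "zstarI H F G S w x I \<in> feasI G S w x I"
proof -
  let ?K = "feasI G S w x I"
  let ?is_min = "\<lambda>z. z \<in> ?K \<and> (\<forall>z'\<in>?K. qp_cost H F x z \<le> qp_cost H F x z')"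
  obtain z where "z \<in> ?K" "\<And>z'. z' \<in> ?K \<Longrightarrow> qp_cost H F x z \<le> qp_cost H F x z'"
    using qp_cost_attains_min[OF assms(1) closed_feasI assms(2)] by blast
  then have min: "?is_min z"
    by blast
  have "zstarI H F G S w x I = z"
    unfolding zstarI_def
  proof (rule the_equality)
    show "?is_min z" by (fact min)
    show "y = z" if "?is_min y" for y
      using qp_cost_min_unique[OF assms(1) convex_feasI] that min by blast
  qed
  then show ?thesis
    using min by simp
qed

lemma Vj_iff_Zj: "(a, b) \<in> Vj G S w j \<longleftrightarrow> b \<in> Zj G S w a j"
  by (auto simp: Vj_def Zj_def)

lemma Vset_iff_feasI: "(a, b) \<in> Vset G S w \<longleftrightarrow> b \<in> feasI G S w a UNIV"
  by (simp add: Vset_def feasI_def Vj_iff_Zj)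

lemma dist_Pair_le:
  assumes "dist a a' \<le> d" "dist b b' \<le> \<kappa> * d"
  shows "dist (a, b) (a', b') \<le> sqrt (1 + \<kappa>\<^sup>2) * d"
proof -
  have "0 \<le> d"
    using assms(1) zero_le_dist order.trans by blast
  have "(dist b b')\<^sup>2 \<le> (\<kappa> * d)\<^sup>2"
    using assms(2) by (simp add: power_mono)
  moreover have "(dist a a')\<^sup>2 \<le> d\<^sup>2"
    using assms(1) by (simp add: power_mono)
  ultimately have "(dist a a')\<^sup>2 + (dist b b')\<^sup>2 \<le> (sqrt (1 + \<kappa>\<^sup>2) * d)\<^sup>2"
    by (simp add: power_mult_distrib algebra_simps)
  then show ?thesis
    unfolding dist_Pair_Pair using \<open>0 \<le> d\<close> real_le_lsqrt by simp
qed

lemma cball_slice_subset_Zj: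
  assumes "cball (a, b) (sqrt (1 + \<kappa>\<^sup>2) * dist a x) \<subseteq> Vj G S w j"
  shows "cball b (\<kappa> * dist a x) \<subseteq> Zj G S w x j"
proof
  fix z
  assume "z \<in> cball b (\<kappa> * dist a x)"
  then have "(x, z) \<in> cball (a, b) (sqrt (1 + \<kappa>\<^sup>2) * dist a x)"
    by (simp add: dist_Pair_le)
  then show "z \<in> Zj G S w x j"
    using assms Vj_iff_Zj by blast
qed

theorem lemma5:
  fixes H :: "real^'z^'z" and F :: "real^'z^'x" and G :: "real^'z^'c"
    and S :: "real^'x^'c" and w :: "real^'c" and \<kappa> :: real and x xh :: "real^'x"
  assumes symH: "transpose H = H"
    and pdH: "\<forall>z::real^'z. z \<noteq> 0 \<longrightarrow> z \<bullet> (H *v z) > 0"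
    and feas: "\<forall>x'::real^'x. {z. \<forall>j. (G *v z) $ j \<le> (S *v x') $ j + w $ j} \<noteq> {}"
    and lip: "\<forall>x1 x2 I. norm (zstarI H F G S w x1 I - zstarI H F G S w x2 I) \<le> \<kappa> * norm (x1 - x2)"
  shows "(xh, zstar H F G S w xh) \<in> Vset G S w \<and>
    {j. cball (xh, zstar H F G S w xh) (sqrt (1 + \<kappa>^2) * norm (x - xh)) \<subseteq> Vj G S w j}
      \<subseteq> {j. cball (zstar H F G S w xh) (\<kappa> * norm (x - xh)) \<subseteq> Zj G S w x j}"
proof
  have "feasI G S w xh UNIV = {z. \<forall>j. (G *v z) $ j \<le> (S *v xh) $ j + w $ j}"
    by (auto simp: feasI_def Zj_def)
  then have "feasI G S w xh UNIV \<noteq> {}"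
    using feas by blast
  then show "(xh, zstar H F G S w xh) \<in> Vset G S w"
    unfolding Vset_iff_feasI zstar_def by (rule zstarI_feasible[OF pdH])
next
  have "norm (x - xh) = dist xh x"
    by (simp add: dist_norm norm_minus_commute)
  then show "{j. cball (xh, zstar H F G S w xh) (sqrt (1 + \<kappa>^2) * norm (x - xh)) \<subseteq> Vj G S w j}
      \<subseteq> {j. cball (zstar H F G S w xh) (\<kappa> * norm (x - xh)) \<subseteq> Zj G S w x j}"
    using cball_slice_subset_Zj by (simp only:) blast
qed

end
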